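(* For any finite simple graphs $G$ and $H$ without isolated vertices and each of order at least three, $$\gamma_{tR}(G\times H)\ge \max\left\{\frac{\rho_o(H)\gamma_{tR}(G)}{2},\frac{\rho_o(G)\gamma_{tR}(H)}{2}\right\}.$$
   Context: An open packing of $G$ is a set $D$ of vertices with $N(u)\cap N(v)=\emptyset$ for all distinct $u,v\in D$ (open neighborhoods); $\rho_o(G)$ is the maximum size of an open packing. A total Roman dominating function on $G$ is a map $f:V(G)\to\{0,1,2\}$ such that every vertex with label 0 has a neighbor with label 2 and the subgraph induced by vertices with positive labels has no isolated vertices; $\gamma_{tR}(G)$ is the minimum of $\sum_v f(v)$ over such $f$. The direct product $G\times H$ has vertex set $V(G)\times V(H)$, with $(g,h)(g',h')$ an edge iff $gg'\in E(G)$ and $hh'\in E(H)$. *)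

theory Defs
  imports Complex_Main
begin

definition simple_graph :: "'a set \<Rightarrow> ('a \<times> 'a) set \<Rightarrow> bool" where
  "simple_graph V E \<longleftrightarrow> finite V \<and> E \<subseteq> V \<times> V \<and> sym E \<and> irrefl E"

definition nbhd :: "('a \<times> 'a) set \<Rightarrow> 'a \<Rightarrow> 'a set" where
  "nbhd E v = {u. (v, u) \<in> E}"

definition no_isolated :: "'a set \<Rightarrow> ('a \<times> 'a) set \<Rightarrow> bool" where
  "no_isolated V E \<longleftrightarrow> (\<forall>v\<in>V. nbhd E v \<noteq> {})"

definition open_packing :: "'a set \<Rightarrow> ('a \<times> 'a) set \<Rightarrow> 'a set \<Rightarrow> bool" where
  "open_packing V E D \<longleftrightarrow> D \<subseteq> V \<and>
     (\<forall>u\<in>D. \<forall>v\<in>D. u \<noteq> v \<longrightarrow> nbhd E u \<inter> nbhd E v = {})"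

definition open_packing_number :: "'a set \<Rightarrow> ('a \<times> 'a) set \<Rightarrow> nat" where
  "open_packing_number V E = Max {card D | D. open_packing V E D}"

definition trdf :: "'a set \<Rightarrow> ('a \<times> 'a) set \<Rightarrow> ('a \<Rightarrow> nat) \<Rightarrow> bool" where
  "trdf V E f \<longleftrightarrow> (\<forall>v\<in>V. f v \<le> 2)
     \<and> (\<forall>v\<in>V. f v = 0 \<longrightarrow> (\<exists>u\<in>nbhd E v. f u = 2))
     \<and> (\<forall>v\<in>V. f v > 0 \<longrightarrow> (\<exists>u\<in>nbhd E v. u \<in> V \<and> f u > 0))"

definition total_roman_domination_number :: "'a set \<Rightarrow> ('a \<times> 'a) set \<Rightarrow> nat" where
  "total_roman_domination_number V E = Min {(\<Sum>v\<in>V. f v) | f. trdf V E f}"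

definition direct_product_edges ::
  "('a \<times> 'a) set \<Rightarrow> ('b \<times> 'b) set \<Rightarrow> (('a \<times> 'b) \<times> ('a \<times> 'b)) set" where
  "direct_product_edges E F =
     {((g, h), (g', h')) | g h g' h'. (g, g') \<in> E \<and> (h, h') \<in> F}"

end

theory Submission
  imports Defs
begin

text \<open>Let \<open>f\<close> be a minimum total Roman dominating function of \<open>G \<times> H\<close> and \<open>D\<close> a
  maximum open packing of \<open>H\<close>. For \<open>i \<in> D\<close>, collapsing \<open>f\<close> onto \<open>G\<close> along the closed
  neighbourhood \<open>N[i]\<close>, i.e. \<open>g\<^sub>i x = min 2 (\<Sum>h\<in>N[i]. f (x, h))\<close>, gives a total Roman
  dominating function of \<open>G\<close>: a neighbour \<open>(x', h)\<close> of \<open>(x, i)\<close> with a positive label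
  has \<open>h \<in> N(i)\<close>, so \<open>x'\<close> gets a positive label as well. Hence \<open>\<gamma>\<^sub>t\<^sub>R(G) \<le> w(g\<^sub>i)\<close>.
  Since the open neighbourhoods of the vertices of \<open>D\<close> are pairwise disjoint, each vertex
  of \<open>H\<close> lies in at most two of the sets \<open>N[i]\<close>, so summing over \<open>i \<in> D\<close> yields
  \<open>|D| \<gamma>\<^sub>t\<^sub>R(G) \<le> 2 w(f)\<close>; the other bound follows by symmetry.\<close>

lemma trdf_sum_le:
  assumes "trdf V E f"
  shows "(\<Sum>v\<in>V. f v) \<le> 2 * card V"
proof -
  have "(\<Sum>v\<in>V. f v) \<le> (\<Sum>v\<in>V. 2)"
    by (rule sum_mono) (use assms in \<open>auto simp: trdf_def\<close>)
  then show ?thesis by simp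
qed

lemma finite_trdf_weights:
  "finite {(\<Sum>v\<in>V. f v) | f. trdf V E f}"
  by (rule finite_subset[of _ "{..2 * card V}"]) (auto dest: trdf_sum_le)

lemma total_roman_domination_number_le:
  assumes "trdf V E f"
  shows "total_roman_domination_number V E \<le> (\<Sum>v\<in>V. f v)"
  unfolding total_roman_domination_number_def
  using assms by (intro Min_le[OF finite_trdf_weights]) blast

lemma total_roman_domination_number_attained:
  assumes "trdf V E f"
  obtains f' where "trdf V E f'" "total_roman_domination_number V E = (\<Sum>v\<in>V. f' v)"
proof -
  have "Min {(\<Sum>v\<in>V. f v) | f. trdf V E f} \<in> {(\<Sum>v\<in>V. f v) | f. trdf V E f}"
    using assms by (intro Min_in[OF finite_trdf_weights]) blast
  then show ?thesis
    using that unfolding total_roman_domination_number_def by blast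
qed

lemma open_packing_number_attained:
  assumes "finite V"
  obtains D where "open_packing V E D" "open_packing_number V E = card D"
proof -
  have "finite {card D | D. open_packing V E D}"
    by (rule finite_subset[of _ "{..card V}"])
       (use assms in \<open>auto simp: open_packing_def intro: card_mono\<close>)
  moreover have "{card D | D. open_packing V E D} \<noteq> {}"
    by (auto simp: open_packing_def)
  ultimately have "Max {card D | D. open_packing V E D} \<in> {card D | D. open_packing V E D}"
    by (rule Max_in)
  then show ?thesis
    using that unfolding open_packing_number_def by blast
qed

lemma nbhd_direct_product:
  "nbhd (direct_product_edges EG EH) (x, h) = nbhd EG x \<times> nbhd EH h"
  by (auto simp: nbhd_def direct_product_edges_def)

lemma no_isolated_direct_product:
  assumes "no_isolated VG EG" "no_isolated VH EH"
  shows "no_isolated (VG \<times> VH) (direct_product_edges EG EH)"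
  using assms by (auto simp: no_isolated_def nbhd_direct_product)

lemma trdf_const_two:
  assumes "no_isolated V E" "E \<subseteq> V \<times> V"
  shows "trdf V E (\<lambda>_. 2)"
  using assms by (fastforce simp: trdf_def no_isolated_def nbhd_def)

lemma trdf_direct_product_swap:
  assumes "trdf (VG \<times> VH) (direct_product_edges EG EH) f"
  shows "trdf (VH \<times> VG) (direct_product_edges EH EG) (f \<circ> prod.swap)"
  using assms unfolding trdf_def
  by (simp add: nbhd_direct_product) blast

lemma sum_direct_product_swap:
  "(\<Sum>v\<in>VH \<times> VG. (f \<circ> prod.swap) v) = (\<Sum>v\<in>VG \<times> VH. f v)"
proof -
  have "(\<Sum>v\<in>VH \<times> VG. (f \<circ> prod.swap) v) = (\<Sum>v\<in>prod.swap ` (VH \<times> VG). f v)"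
    by (rule sum.reindex[symmetric]) (simp add: inj_on_def)
  also have "prod.swap ` (VH \<times> VG) = VG \<times> VH" by auto
  finally show ?thesis .
qed

lemma nbhd_subset:
  assumes "E \<subseteq> V \<times> V"
  shows "nbhd E v \<subseteq> V"
  using assms by (auto simp: nbhd_def)

lemma finite_nbhd:
  assumes "finite V" "E \<subseteq> V \<times> V"
  shows "finite (nbhd E v)"
  using assms(1) nbhd_subset[OF assms(2)] by (rule finite_subset[rotated])

lemma trdf_collapse_closed_nbhd:
  assumes f: "trdf (VG \<times> VH) (direct_product_edges EG EH) f"
    and EG: "EG \<subseteq> VG \<times> VG" and i: "i \<in> VH" and fin: "finite (nbhd EH i)"
  shows "trdf VG EG (\<lambda>x. min 2 (\<Sum>h\<in>insert i (nbhd EH i). f (x, h)))"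
    (is "trdf VG EG ?g")
proof -
  have g_ge: "min 2 (f (x', h)) \<le> ?g x'" if "h \<in> nbhd EH i" for x' h
  proof -
    have "f (x', h) \<le> (\<Sum>h\<in>insert i (nbhd EH i). f (x', h))"
      using fin that by (intro member_le_sum) auto
    then show ?thesis by simp
  qed
  have f_two: "\<exists>u\<in>nbhd EG x \<times> nbhd EH i. f u = 2" if "x \<in> VG" "f (x, i) = 0" for x
    using f that i unfolding trdf_def by (metis SigmaI nbhd_direct_product)
  have f_pos: "\<exists>u\<in>nbhd EG x \<times> nbhd EH i. u \<in> VG \<times> VH \<and> f u > 0"
    if "x \<in> VG" "f (x, i) > 0" for x
    using f that i unfolding trdf_def by (metis SigmaI nbhd_direct_product)
  have two_nbr: "\<exists>x'\<in>nbhd EG x. x' \<in> VG \<and> ?g x' = 2"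
    if x: "x \<in> VG" "f (x, i) = 0" for x
  proof -
    obtain x' h where "x' \<in> nbhd EG x" "h \<in> nbhd EH i" "f (x', h) = 2"
      using f_two[OF x] by auto
    moreover from this have "x' \<in> VG" using EG by (auto simp: nbhd_def)
    ultimately show ?thesis using g_ge[of h x'] by (intro bexI[of _ x']) auto
  qed
  have pos_nbr: "\<exists>x'\<in>nbhd EG x. x' \<in> VG \<and> ?g x' > 0" if x: "x \<in> VG" for x
  proof (cases "f (x, i) = 0")
    case True
    then show ?thesis using two_nbr[OF x] by fastforce
  next
    case False
    then obtain x' h where "x' \<in> nbhd EG x" "h \<in> nbhd EH i" "x' \<in> VG" "f (x', h) > 0"
      using f_pos[OF x] False by auto
    then show ?thesis using g_ge[of h x'] by (intro bexI[of _ x']) auto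
  qed
  show ?thesis
    unfolding trdf_def
  proof (intro conjI ballI impI)
    fix x assume "x \<in> VG" "?g x = 0"
    then have "(\<Sum>h\<in>insert i (nbhd EH i). f (x, h)) = 0" by simp
    then have "f (x, i) = 0" using fin by simp
    then show "\<exists>u\<in>nbhd EG x. ?g u = 2" using two_nbr \<open>x \<in> VG\<close> by blast
  qed (use pos_nbr in auto)
qed

lemma sum_closed_nbhds_open_packing_le:
  fixes \<phi> :: "'a \<Rightarrow> nat"
  assumes D: "open_packing V E D" and "finite V" and "E \<subseteq> V \<times> V"
  shows "(\<Sum>i\<in>D. \<Sum>h\<in>insert i (nbhd E i). \<phi> h) \<le> 2 * (\<Sum>h\<in>V. \<phi> h)"
proof -
  have DV: "D \<subseteq> V" and disj: "\<And>u v. u \<in> D \<Longrightarrow> v \<in> D \<Longrightarrow> u \<noteq> v \<Longrightarrow> nbhd E u \<inter> nbhd E v = {}"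
    using D by (auto simp: open_packing_def)
  note nbhd_V = nbhd_subset[OF \<open>E \<subseteq> V \<times> V\<close>]
  note fin_nbhd = finite_nbhd[OF \<open>finite V\<close> \<open>E \<subseteq> V \<times> V\<close>]
  have "finite D" using DV \<open>finite V\<close> by (rule finite_subset)
  have "(\<Sum>i\<in>D. \<Sum>h\<in>insert i (nbhd E i). \<phi> h) \<le> (\<Sum>i\<in>D. \<phi> i + (\<Sum>h\<in>nbhd E i. \<phi> h))"
    by (rule sum_mono) (simp add: sum.insert_if fin_nbhd)
  also have "\<dots> = (\<Sum>i\<in>D. \<phi> i) + (\<Sum>i\<in>D. \<Sum>h\<in>nbhd E i. \<phi> h)"
    by (rule sum.distrib)
  also have "(\<Sum>i\<in>D. \<Sum>h\<in>nbhd E i. \<phi> h) = (\<Sum>h\<in>(\<Union>i\<in>D. nbhd E i). \<phi> h)"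
    by (rule sum.UNION_disjoint[symmetric]) (use \<open>finite D\<close> fin_nbhd disj in auto)
  also have "\<dots> \<le> (\<Sum>h\<in>V. \<phi> h)"
    by (rule sum_mono2) (use \<open>finite V\<close> nbhd_V in auto)
  also have "(\<Sum>i\<in>D. \<phi> i) \<le> (\<Sum>h\<in>V. \<phi> h)"
    by (rule sum_mono2) (use \<open>finite V\<close> DV in auto)
  finally show ?thesis by simp
qed

lemma card_open_packing_mult_total_roman_domination_number_le:
  assumes "simple_graph VG EG" "simple_graph VH EH"
    and D: "open_packing VH EH D"
    and f: "trdf (VG \<times> VH) (direct_product_edges EG EH) f"
  shows "card D * total_roman_domination_number VG EG \<le> 2 * (\<Sum>v\<in>VG \<times> VH. f v)"
proof -
  have EG: "EG \<subseteq> VG \<times> VG" and "finite VH" and EH: "EH \<subseteq> VH \<times> VH"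
    using assms(1,2) by (auto simp: simple_graph_def)
  have DV: "D \<subseteq> VH" using D by (simp add: open_packing_def)
  note fin_nbhd = finite_nbhd[OF \<open>finite VH\<close> EH]
  let ?F = "\<lambda>i x. \<Sum>h\<in>insert i (nbhd EH i). f (x, h)"
  have "card D * total_roman_domination_number VG EG
      = (\<Sum>i\<in>D. total_roman_domination_number VG EG)"
    by simp
  also have "\<dots> \<le> (\<Sum>i\<in>D. \<Sum>x\<in>VG. min 2 (?F i x))"
    using DV by (intro sum_mono total_roman_domination_number_le
        trdf_collapse_closed_nbhd[OF f EG _ fin_nbhd]) auto
  also have "\<dots> \<le> (\<Sum>i\<in>D. \<Sum>x\<in>VG. ?F i x)"
    by (intro sum_mono) simp
  also have "\<dots> = (\<Sum>x\<in>VG. \<Sum>i\<in>D. ?F i x)"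
    by (rule sum.swap)
  also have "\<dots> \<le> (\<Sum>x\<in>VG. 2 * (\<Sum>h\<in>VH. f (x, h)))"
    using sum_closed_nbhds_open_packing_le[OF D \<open>finite VH\<close> EH] by (intro sum_mono)
  also have "\<dots> = 2 * (\<Sum>v\<in>VG \<times> VH. f v)"
    by (simp add: sum_distrib_left[symmetric] sum.cartesian_product)
  finally show ?thesis .
qed

lemma open_packing_number_mult_total_roman_domination_number_le:
  assumes "simple_graph VG EG" "simple_graph VH EH"
    and f: "trdf (VG \<times> VH) (direct_product_edges EG EH) f"
  shows "real (open_packing_number VH EH) * real (total_roman_domination_number VG EG)
      \<le> 2 * real (\<Sum>v\<in>VG \<times> VH. f v)"
proof -
  obtain D where "open_packing VH EH D" "open_packing_number VH EH = card D"
    using open_packing_number_attained assms(2) by (auto simp: simple_graph_def)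
  then show ?thesis
    using card_open_packing_mult_total_roman_domination_number_le[OF assms(1,2) _ f]
    by (metis of_nat_le_iff of_nat_mult of_nat_numeral)
qed

theorem theorem2p8:
  fixes VG :: "'a set" and EG :: "('a \<times> 'a) set"
    and VH :: "'b set" and EH :: "('b \<times> 'b) set"
  assumes "simple_graph VG EG" and "simple_graph VH EH"
    and "no_isolated VG EG" and "no_isolated VH EH"
    and "card VG \<ge> 3" and "card VH \<ge> 3"
  shows "real (total_roman_domination_number (VG \<times> VH) (direct_product_edges EG EH))
     \<ge> max (real (open_packing_number VH EH) * real (total_roman_domination_number VG EG) / 2)
             (real (open_packing_number VG EG) * real (total_roman_domination_number VH EH) / 2)"
proof -
  have "direct_product_edges EG EH \<subseteq> (VG \<times> VH) \<times> (VG \<times> VH)"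
    using assms(1,2) by (auto simp: simple_graph_def direct_product_edges_def)
  then have "trdf (VG \<times> VH) (direct_product_edges EG EH) (\<lambda>_. 2)"
    using trdf_const_two no_isolated_direct_product assms(3,4) by blast
  then obtain f where f: "trdf (VG \<times> VH) (direct_product_edges EG EH) f"
    and min: "total_roman_domination_number (VG \<times> VH) (direct_product_edges EG EH)
      = (\<Sum>v\<in>VG \<times> VH. f v)"
    by (rule total_roman_domination_number_attained)
  have "real (open_packing_number VH EH) * real (total_roman_domination_number VG EG)
      \<le> 2 * real (\<Sum>v\<in>VG \<times> VH. f v)"
    using open_packing_number_mult_total_roman_domination_number_le[OF assms(1,2) f] .
  moreover have "real (open_packing_number VG EG) * real (total_roman_domination_number VH EH)
      \<le> 2 * real (\<Sum>v\<in>VG \<times> VH. f v)"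
    using open_packing_number_mult_total_roman_domination_number_le
        [OF assms(2,1) trdf_direct_product_swap[OF f]]
    by (simp only: sum_direct_product_swap)
  ultimately show ?thesis using min by simp
qed

end
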